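(* Let $m\ge 2$ be an integer and let $\mathcal{A}\subset\mathbb{R}$ be a finite alphabet. Let $(X^{(j)}_i)_{i\ge 1,\,1\le j\le m}$ be independent and identically distributed random variables with values in $\mathcal{A}$. Let $S:\mathcal{A}^m\to[0,\infty)$ be a function that is not identically zero, is invariant under permutations of its $m$ arguments, satisfies $s^*:=\sup_{x\in\mathcal{A}^m}S(x)<\infty$, and for which there is a constant $D>0$ such that $|S(x)-S(y)|\le D$ whenever $x,y\in\mathcal{A}^m$ differ in at most one coordinate. For $N\in\mathbb{N}$ let $L_N$ be the optimal alignment score of the $m$ words $X^{(j)}_1\cdots X^{(j)}_N$, $j=1,\dots,m$. Then for every $n\in\mathbb{N}$ and every $x>0$, $$\mathbb{P}\big(L_{m^2n}\ge m^2x\big)\le 2^{-m}m^{4m}n^{2m}\Big(\mathbb{P}\big(L_{mn}\ge m(x-s^* )\big)\Big)^{1/m}.$$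
   Context: Alignments and optimal score: for finite words $w^{(1)},\dots,w^{(m)}$ over $\mathcal{A}$ of lengths $\ell_1,\dots,\ell_m$, an alignment is a choice of an integer $k\ge 0$ and, for each $j$, indices $1\le \pi^{(j)}_1<\cdots<\pi^{(j)}_k\le \ell_j$; its score is $\sum_{i=1}^k S(w^{(1)}_{\pi^{(1)}_i},\dots,w^{(m)}_{\pi^{(m)}_i})$. The optimal score $L(w^{(1)};\dots;w^{(m)})$ is the maximum score over all alignments. *)

theory Defs
  imports "HOL-Probability.Probability"
begin

text \<open>Words are lists; an m-tuple of letters is a list of length m.
  An alignment of the words ws (0-based positions) is a number k and, for each word j,
  a strictly increasing map of {..<k} into the positions of word j.\<close>

definition alignment_scores :: "(real list \<Rightarrow> real) \<Rightarrow> real list list \<Rightarrow> real set" where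
  "alignment_scores S ws =
     {(\<Sum>i<k. S (map (\<lambda>j. (ws ! j) ! (\<pi> j i)) [0..<length ws])) | (k::nat) (\<pi>::nat \<Rightarrow> nat \<Rightarrow> nat).
        \<forall>j < length ws. strict_mono_on {..<k} (\<pi> j) \<and> (\<forall>i<k. \<pi> j i < length (ws ! j))}"

definition opt_score :: "(real list \<Rightarrow> real) \<Rightarrow> real list list \<Rightarrow> real" where
  "opt_score S ws = Sup (alignment_scores S ws)"

definition L_N :: "(real list \<Rightarrow> real) \<Rightarrow> nat \<Rightarrow> (nat \<Rightarrow> nat \<Rightarrow> 'w \<Rightarrow> real) \<Rightarrow> nat \<Rightarrow> 'w \<Rightarrow> real" where
  "L_N S m X N \<omega> = opt_score S (map (\<lambda>j. map (\<lambda>i. X i j \<omega>) [1..<N+1]) [1..<m+1])"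

end

theory Submission
  imports Defs
begin

text \<open>If the \<open>m\<close> words of length \<open>m^2 n\<close> align with score at least \<open>m^2 x\<close>, cut an optimal
  alignment into \<open>m^2\<close> consecutive blocks, each scoring at least \<open>x - s*\<close>. The blocks occupy
  disjoint windows of every word, so some block lives in windows of total length at most \<open>m n\<close>.
  The event is therefore covered by at most \<open>(m^2 n)^m (m n)^m\<close> events \<open>E(st, lw)\<close>: the windows
  with starts \<open>st\<close> and lengths \<open>lw\<close>, \<open>\<Sum> lw \<le> m n\<close>, align with score at least \<open>x - s*\<close>.
  Finally \<open>P(E)^m \<le> P(L_{mn} \<ge> m (x - s*))\<close>: stacking \<open>m\<close> cyclically rotated copies of the window
  layout in the first \<open>m n\<close> letters of the words yields \<open>m\<close> independent copies of \<open>E\<close>, and on their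
  intersection the concatenated alignments (rotation does not matter, \<open>S\<close> being symmetric) score at
  least \<open>m (x - s*)\<close>.\<close>

section \<open>Alignments\<close>

definition alignment_score :: "(real list \<Rightarrow> real) \<Rightarrow> real list list \<Rightarrow> nat \<Rightarrow> (nat \<Rightarrow> nat \<Rightarrow> nat) \<Rightarrow> real" where
  "alignment_score S ws k \<pi> = (\<Sum>i<k. S (map (\<lambda>j. ws ! j ! \<pi> j i) [0..<length ws]))"

definition is_alignment :: "real list list \<Rightarrow> nat \<Rightarrow> (nat \<Rightarrow> nat \<Rightarrow> nat) \<Rightarrow> bool" where
  "is_alignment ws k \<pi> \<longleftrightarrow>
     (\<forall>j<length ws. strict_mono_on {..<k} (\<pi> j) \<and> (\<forall>i<k. \<pi> j i < length (ws ! j)))"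

lemma alignment_scores_eq:
  "alignment_scores S ws = {alignment_score S ws k \<pi> | k \<pi>. is_alignment ws k \<pi>}"
  by (simp add: alignment_scores_def alignment_score_def is_alignment_def)

lemma is_alignment_0 [simp]: "is_alignment ws 0 \<pi>"
  by (simp add: is_alignment_def)

lemma is_alignment_length_le:
  assumes "is_alignment ws k \<pi>" "j < length ws"
  shows "k \<le> length (ws ! j)"
proof -
  have "inj_on (\<pi> j) {..<k}" "\<pi> j ` {..<k} \<subseteq> {..<length (ws ! j)}"
    using assms by (auto simp: is_alignment_def intro: strict_mono_on_imp_inj_on)
  then show ?thesis
    using card_inj_on_le[of "\<pi> j" "{..<k}" "{..<length (ws ! j)}"] by simp
qed

lemma finite_alignment_scores:
  assumes "ws \<noteq> []"
  shows "finite (alignment_scores S ws)"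
proof -
  define F where "F = (SIGMA k:{..length (ws ! 0)}.
                         PiE {..<length ws} (\<lambda>j. PiE {..<k} (\<lambda>i. {..<length (ws ! j)})))"
  have "alignment_scores S ws \<subseteq> (\<lambda>(k, \<pi>). alignment_score S ws k \<pi>) ` F"
  proof
    fix s assume "s \<in> alignment_scores S ws"
    then obtain k \<pi> where s: "s = alignment_score S ws k \<pi>" and \<pi>: "is_alignment ws k \<pi>"
      by (auto simp: alignment_scores_eq)
    define \<pi>' where "\<pi>' = (\<lambda>j\<in>{..<length ws}. \<lambda>i\<in>{..<k}. \<pi> j i)"
    have "k \<le> length (ws ! 0)"
      using is_alignment_length_le[OF \<pi>] assms by simp
    moreover have "\<pi>' \<in> PiE {..<length ws} (\<lambda>j. PiE {..<k} (\<lambda>i. {..<length (ws ! j)}))"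
      using \<pi> by (auto simp: \<pi>'_def is_alignment_def)
    moreover have "alignment_score S ws k \<pi>' = s"
      unfolding s alignment_score_def \<pi>'_def
      by (intro sum.cong refl arg_cong[where f=S] map_cong) auto
    ultimately show "s \<in> (\<lambda>(k, \<pi>). alignment_score S ws k \<pi>) ` F"
      unfolding F_def by (intro image_eqI[where x="(k, \<pi>')"]) auto
  qed
  moreover have "finite F"
    unfolding F_def by (intro finite_SigmaI finite_PiE) auto
  ultimately show ?thesis
    by (meson finite_imageI finite_subset)
qed

lemma alignment_score_le_opt_score:
  assumes "ws \<noteq> []" "is_alignment ws k \<pi>"
  shows "alignment_score S ws k \<pi> \<le> opt_score S ws"
  unfolding opt_score_def using assms finite_alignment_scores[OF assms(1)]
  by (intro cSup_upper bdd_above_finite) (auto simp: alignment_scores_eq)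

lemma opt_score_attained:
  assumes "ws \<noteq> []"
  obtains k \<pi> where "is_alignment ws k \<pi>" "opt_score S ws = alignment_score S ws k \<pi>"
proof -
  have "alignment_scores S ws \<noteq> {}"
    by (auto simp: alignment_scores_eq intro: is_alignment_0)
  then have "opt_score S ws \<in> alignment_scores S ws"
    using finite_alignment_scores[OF assms] by (simp add: opt_score_def cSup_eq_Max)
  then show ?thesis
    using that by (auto simp: alignment_scores_eq)
qed

lemma opt_score_nonneg: "ws \<noteq> [] \<Longrightarrow> 0 \<le> opt_score S ws"
  using alignment_score_le_opt_score[of ws 0] by (simp add: alignment_score_def)

lemma opt_score_Nil_words:
  assumes "ws \<noteq> []" "\<forall>w\<in>set ws. w = []"
  shows "opt_score S ws = 0"
proof -
  obtain k \<pi> where "is_alignment ws k \<pi>" "opt_score S ws = alignment_score S ws k \<pi>"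
    using opt_score_attained[OF assms(1)] .
  moreover from this have "k = 0"
    using is_alignment_length_le[of ws k \<pi> 0] nth_mem[of 0 ws] assms by fastforce
  ultimately show ?thesis
    by (simp add: alignment_score_def)
qed

lemma is_alignment_append:
  assumes \<pi>1: "is_alignment us k1 \<pi>1" and \<pi>2: "is_alignment vs k2 \<pi>2"
    and len: "length us = length vs"
  shows "is_alignment (map2 (@) us vs) (k1 + k2)
           (\<lambda>j i. if i < k1 then \<pi>1 j i else length (us ! j) + \<pi>2 j (i - k1))"
  unfolding is_alignment_def
proof (intro allI impI conjI strict_mono_onI)
  fix j assume "j < length (map2 (@) us vs)"
  then have j: "j < length us" "j < length vs"
    using len by auto
  have mono1: "strict_mono_on {..<k1} (\<pi>1 j)" and bound1: "\<forall>i<k1. \<pi>1 j i < length (us ! j)"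
    using \<pi>1 j by (auto simp: is_alignment_def)
  have mono2: "strict_mono_on {..<k2} (\<pi>2 j)" and bound2: "\<forall>i<k2. \<pi>2 j i < length (vs ! j)"
    using \<pi>2 j by (auto simp: is_alignment_def)
  {
    fix a b assume ab: "a \<in> {..<k1 + k2}" "b \<in> {..<k1 + k2}" "a < b"
    show "(if a < k1 then \<pi>1 j a else length (us ! j) + \<pi>2 j (a - k1))
        < (if b < k1 then \<pi>1 j b else length (us ! j) + \<pi>2 j (b - k1))"
    proof (cases "b < k1")
      case True
      then show ?thesis using ab mono1 by (auto simp: strict_mono_on_def)
    next
      case False
      have "\<pi>2 j (a - k1) < \<pi>2 j (b - k1)" if "\<not> a < k1"
        using that False ab by (intro strict_mono_onD[OF mono2]) auto
      then show ?thesis using False bound1 by auto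
    qed
  }
  fix i assume "i < k1 + k2"
  then show "(if i < k1 then \<pi>1 j i else length (us ! j) + \<pi>2 j (i - k1)) < length (map2 (@) us vs ! j)"
    using bound1 bound2 j by auto
qed

lemma sum_lessThan_add:
  "(\<Sum>i<a + (b::nat). f i) = (\<Sum>i<a. f i) + (\<Sum>i<b. f (a + i) :: 'a::comm_monoid_add)"
  by (induction b) (simp_all add: add_ac)

lemma alignment_score_append:
  assumes \<pi>1: "is_alignment us k1 \<pi>1" and len: "length us = length vs"
  shows "alignment_score S (map2 (@) us vs) (k1 + k2)
           (\<lambda>j i. if i < k1 then \<pi>1 j i else length (us ! j) + \<pi>2 j (i - k1))
         = alignment_score S us k1 \<pi>1 + alignment_score S vs k2 \<pi>2"
  unfolding alignment_score_def sum_lessThan_add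
proof (rule arg_cong2[where f="(+)"]; rule sum.cong[OF refl]; rule arg_cong[where f=S])
  fix i assume "i \<in> {..<k1}"
  then show "map (\<lambda>j. map2 (@) us vs ! j ! (if i < k1 then \<pi>1 j i else length (us ! j) + \<pi>2 j (i - k1)))
               [0..<length (map2 (@) us vs)]
           = map (\<lambda>j. us ! j ! \<pi>1 j i) [0..<length us]"
    using \<pi>1 len by (intro map_cong) (auto simp: is_alignment_def nth_append)
next
  fix i assume "i \<in> {..<k2}"
  then show "map (\<lambda>j. map2 (@) us vs ! j ! (if k1 + i < k1 then \<pi>1 j (k1 + i)
                                              else length (us ! j) + \<pi>2 j (k1 + i - k1)))
               [0..<length (map2 (@) us vs)]
           = map (\<lambda>j. vs ! j ! \<pi>2 j i) [0..<length vs]"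
    using len by (intro map_cong) (auto simp: nth_append)
qed

lemma opt_score_append_superadditive:
  assumes "length us = length vs" "us \<noteq> []"
  shows "opt_score S us + opt_score S vs \<le> opt_score S (map2 (@) us vs)"
proof -
  obtain k1 \<pi>1 where \<pi>1: "is_alignment us k1 \<pi>1" "opt_score S us = alignment_score S us k1 \<pi>1"
    using opt_score_attained assms by metis
  have "vs \<noteq> []" using assms by auto
  then obtain k2 \<pi>2 where \<pi>2: "is_alignment vs k2 \<pi>2" "opt_score S vs = alignment_score S vs k2 \<pi>2"
    using opt_score_attained by metis
  show ?thesis
    using alignment_score_le_opt_score[OF _ is_alignment_append[OF \<pi>1(1) \<pi>2(1) assms(1)], of S]
      alignment_score_append[OF \<pi>1(1) assms(1), of S] \<pi>1(2) \<pi>2(2) \<open>vs \<noteq> []\<close> assms(2)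
    by (simp add: zip_eq_Nil_iff)
qed

lemma mset_rotate [simp]: "mset (rotate n xs) = mset xs"
  by (metis append_take_drop_id mset_append rotate_drop_take union_commute)

lemma set_alignment_column_subset:
  assumes "is_alignment ws k \<pi>" "i < k" "\<forall>w\<in>set ws. set w \<subseteq> A"
  shows "set (map (\<lambda>j. ws ! j ! \<pi> j i) [0..<length ws]) \<subseteq> A"
proof
  fix a assume "a \<in> set (map (\<lambda>j. ws ! j ! \<pi> j i) [0..<length ws])"
  then obtain j where j: "j < length ws" and a: "a = ws ! j ! \<pi> j i"
    by auto
  have "\<pi> j i < length (ws ! j)"
    using assms(1,2) j by (simp add: is_alignment_def)
  then have "a \<in> set (ws ! j)"
    unfolding a by (rule nth_mem)
  moreover have "ws ! j \<in> set ws"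
    using j by simp
  ultimately show "a \<in> A"
    using assms(3) by auto
qed

lemma opt_score_le_opt_score_rotate:
  assumes sym: "\<And>xs ys. length xs = length ws \<Longrightarrow> set xs \<subseteq> A \<Longrightarrow> mset ys = mset xs \<Longrightarrow> S ys = S xs"
    and ws: "ws \<noteq> []" "\<forall>w\<in>set ws. set w \<subseteq> A"
  shows "opt_score S ws \<le> opt_score S (rotate r ws)"
proof -
  let ?m = "length ws"
  obtain k \<pi> where \<pi>: "is_alignment ws k \<pi>" "opt_score S ws = alignment_score S ws k \<pi>"
    using opt_score_attained[OF ws(1)] .
  define \<pi>' where "\<pi>' j = \<pi> ((r + j) mod ?m)" for j
  have m: "0 < ?m" using ws by simp
  have \<pi>': "is_alignment (rotate r ws) k \<pi>'"
    unfolding is_alignment_def length_rotate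
  proof (intro allI impI)
    fix j assume "j < ?m"
    have "(r + j) mod ?m < ?m" using m by simp
    then show "strict_mono_on {..<k} (\<pi>' j) \<and> (\<forall>i<k. \<pi>' j i < length (rotate r ws ! j))"
      using \<pi>(1) \<open>j < ?m\<close> unfolding is_alignment_def \<pi>'_def by (simp add: nth_rotate)
  qed
  have "alignment_score S (rotate r ws) k \<pi>' = alignment_score S ws k \<pi>"
    unfolding alignment_score_def length_rotate
  proof (intro sum.cong refl)
    fix i assume i: "i \<in> {..<k}"
    define col where "col = map (\<lambda>j. ws ! j ! \<pi> j i) [0..<?m]"
    have "map (\<lambda>j. rotate r ws ! j ! \<pi>' j i) [0..<?m] = rotate r col"
      using m by (intro nth_equalityI) (simp_all add: col_def \<pi>'_def nth_rotate)
    moreover have "set col \<subseteq> A"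
      using set_alignment_column_subset[OF \<pi>(1) _ ws(2)] i by (simp add: col_def)
    then have "S (rotate r col) = S col"
      by (intro sym) (simp_all add: col_def)
    ultimately show "S (map (\<lambda>j. rotate r ws ! j ! \<pi>' j i) [0..<?m]) = S col"
      by simp
  qed
  then show ?thesis
    using alignment_score_le_opt_score[OF _ \<pi>', of S] \<pi>(2) ws(1) by simp
qed

section \<open>Heavy windows\<close>

definition windows :: "real list list \<Rightarrow> (nat \<Rightarrow> nat) \<Rightarrow> (nat \<Rightarrow> nat) \<Rightarrow> real list list" where
  "windows ws st lw = map (\<lambda>j. map (\<lambda>i. ws ! j ! (st j + i)) [0..<lw j]) [0..<length ws]"

lemma block_score_le_opt_score_windows:
  assumes ws: "ws \<noteq> []" and \<pi>: "is_alignment ws k \<pi>" and ab: "a < b" "b \<le> k"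
  shows "(\<Sum>i\<in>{a..<b}. S (map (\<lambda>j. ws ! j ! \<pi> j i) [0..<length ws]))
           \<le> opt_score S (windows ws (\<lambda>j. \<pi> j a) (\<lambda>j. Suc (\<pi> j (b - 1)) - \<pi> j a))"
proof -
  let ?w = "windows ws (\<lambda>j. \<pi> j a) (\<lambda>j. Suc (\<pi> j (b - 1)) - \<pi> j a)"
  define \<pi>' where "\<pi>' j i = \<pi> j (a + i) - \<pi> j a" for j i
  have mono: "strict_mono_on {..<k} (\<pi> j)" if "j < length ws" for j
    using \<pi> that by (simp add: is_alignment_def)
  have between: "\<pi> j a \<le> \<pi> j (a + i)" "\<pi> j (a + i) \<le> \<pi> j (b - 1)"
    if "j < length ws" "i < b - a" for j i
    using that ab by (auto intro!: strict_mono_on_leD[OF mono])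
  have in_window: "\<pi>' j i < Suc (\<pi> j (b - 1)) - \<pi> j a" "?w ! j ! \<pi>' j i = ws ! j ! \<pi> j (a + i)"
    if "j < length ws" "i < b - a" for j i
    using between[OF that] that by (auto simp: \<pi>'_def windows_def)
  have "is_alignment ?w (b - a) \<pi>'"
    unfolding is_alignment_def
  proof (intro allI impI conjI strict_mono_onI)
    fix j i i' assume j: "j < length ?w" and "i \<in> {..<b - a}" "i' \<in> {..<b - a}" "i < i'"
    moreover have "a + i' < k"
      using calculation ab by simp
    ultimately show "\<pi>' j i < \<pi>' j i'"
      using between[of j i] strict_mono_onD[OF mono, of j "a + i" "a + i'"]
      by (auto simp: \<pi>'_def windows_def)
  next
    fix j i assume "j < length ?w" "i < b - a"
    then show "\<pi>' j i < length (?w ! j)"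
      using in_window(1)[of j i] by (simp add: windows_def)
  qed
  then have "alignment_score S ?w (b - a) \<pi>' \<le> opt_score S ?w"
    using ws by (intro alignment_score_le_opt_score) (simp_all add: windows_def)
  moreover have "alignment_score S ?w (b - a) \<pi>'
                   = (\<Sum>i<b - a. S (map (\<lambda>j. ws ! j ! \<pi> j (a + i)) [0..<length ws]))"
    unfolding alignment_score_def
    using in_window(2) by (intro sum.cong refl arg_cong[where f=S] map_cong) (auto simp: windows_def)
  moreover have "(\<Sum>i<b - a. S (map (\<lambda>j. ws ! j ! \<pi> j (a + i)) [0..<length ws]))
                   = (\<Sum>i\<in>{a..<b}. S (map (\<lambda>j. ws ! j ! \<pi> j i) [0..<length ws]))"
    using sum.shift_bounds_nat_ivl[of "\<lambda>i. S (map (\<lambda>j. ws ! j ! \<pi> j i) [0..<length ws])" 0 a "b - a"] ab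
    by (simp add: atLeast0LessThan add.commute)
  ultimately show ?thesis
    by simp
qed

lemma exists_heavy_blocks:
  fixes t :: "nat \<Rightarrow> real"
  assumes t: "\<And>i. i < k \<Longrightarrow> 0 \<le> t i \<and> t i \<le> s" and total: "real R * x \<le> (\<Sum>i<k. t i)"
    and "0 \<le> s" "s < x"
  obtains a where "\<And>r. r < R \<Longrightarrow> a r < a (Suc r)" "\<And>r. r \<le> R \<Longrightarrow> a r \<le> k"
    "\<And>r. r < R \<Longrightarrow> x - s \<le> (\<Sum>i\<in>{a r..<a (Suc r)}. t i)"
proof -
  define P where "P c = (\<Sum>i<c. t i)" for c
  define a where "a r = (LEAST c. real r * x \<le> P c)" for r
  have P_mono: "P c \<le> P d" if "c \<le> d" "d \<le> k" for c d
    unfolding P_def using that t by (intro sum_mono2) auto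
  have reach: "real r * x \<le> P k" if "r \<le> R" for r
  proof -
    have "real r * x \<le> real R * x"
      using that \<open>0 \<le> s\<close> \<open>s < x\<close> by (intro mult_right_mono) auto
    then show ?thesis
      using total by (simp add: P_def)
  qed
  have low: "real r * x \<le> P (a r)" and a_le: "a r \<le> k" if "r \<le> R" for r
    using LeastI[of "\<lambda>c. real r * x \<le> P c", OF reach[OF that]]
      Least_le[of "\<lambda>c. real r * x \<le> P c", OF reach[OF that]] by (simp_all add: a_def)
  \<comment> \<open>the first prefix reaching \<open>r x\<close> overshoots by at most one term, hence by at most \<open>s\<close>\<close>
  have high: "P (a r) \<le> real r * x + s" if "r \<le> R" for r
  proof (cases "a r")
    case 0
    then show ?thesis using \<open>0 \<le> s\<close> \<open>s < x\<close> by (simp add: P_def)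
  next
    case (Suc c)
    then have "\<not> real r * x \<le> P c"
      using not_less_Least[of c "\<lambda>c. real r * x \<le> P c"] by (simp add: a_def)
    moreover have "t c \<le> s"
      using t a_le[OF that] Suc by simp
    ultimately show ?thesis
      using Suc by (simp add: P_def)
  qed
  have step: "x - s \<le> P (a (Suc r)) - P (a r)" if "r < R" for r
    using low[of "Suc r"] high[of r] that by (simp add: algebra_simps)
  have increasing: "a r < a (Suc r)" if "r < R" for r
  proof (rule ccontr)
    assume "\<not> a r < a (Suc r)"
    then have "P (a (Suc r)) \<le> P (a r)"
      using P_mono a_le that by simp
    then show False
      using step[OF that] \<open>s < x\<close> by simp
  qed
  have "P (a (Suc r)) = P (a r) + (\<Sum>i\<in>{a r..<a (Suc r)}. t i)" if "r < R" for r
    using sum.atLeastLessThan_concat[of 0 "a r" "a (Suc r)" t] increasing[OF that]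
    by (simp add: P_def atLeast0LessThan)
  then show ?thesis
    using that increasing a_le step by fastforce
qed

lemma sum_le_telescoping:
  fixes f e :: "nat \<Rightarrow> 'a::ordered_comm_monoid_add"
  assumes "\<And>r. r < R \<Longrightarrow> f r + e r \<le> e (Suc r)"
  shows "(\<Sum>r<R. f r) + e 0 \<le> e R"
  using assms
proof (induction R)
  case (Suc R)
  have "(\<Sum>r<Suc R. f r) + e 0 = f R + ((\<Sum>r<R. f r) + e 0)"
    by (simp add: add_ac)
  also have "\<dots> \<le> f R + e R"
    using Suc by (intro add_left_mono) simp
  also have "\<dots> \<le> e (Suc R)"
    using Suc.prems by simp
  finally show ?case .
qed simp

lemma sum_block_spans_le:
  fixes \<pi> a :: "nat \<Rightarrow> nat" and k N R :: nat
  assumes \<pi>: "strict_mono_on {..<k} \<pi>" "\<And>i. i < k \<Longrightarrow> \<pi> i < N"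
    and a: "\<And>r. r < R \<Longrightarrow> a r < a (Suc r)" "\<And>r. r \<le> R \<Longrightarrow> a r \<le> k"
  shows "(\<Sum>r<R. Suc (\<pi> (a (Suc r) - 1)) - \<pi> (a r)) \<le> N"
proof -
  define e where "e r = (if r < R then \<pi> (a r) else N)" for r
  have "Suc (\<pi> (a (Suc r) - 1)) - \<pi> (a r) + e r \<le> e (Suc r)" if r: "r < R" for r
  proof -
    have "a r \<le> a (Suc r) - 1" "a (Suc r) - 1 < k"
      using a(1)[OF r] a(2)[of "Suc r"] r by auto
    then have "\<pi> (a r) \<le> \<pi> (a (Suc r) - 1)"
      by (auto intro: strict_mono_on_leD[OF \<pi>(1)])
    moreover have "\<pi> (a (Suc r) - 1) < e (Suc r)"
    proof (cases "Suc r < R")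
      case True
      then have "a (Suc r) - 1 < a (Suc r)" "a (Suc r) < k"
        using a(1)[of r] a(1)[of "Suc r"] a(2)[of "Suc (Suc r)"] by auto
      then show ?thesis
        using True by (auto simp: e_def intro: strict_mono_onD[OF \<pi>(1)])
    next
      case False
      then show ?thesis
        using \<open>a (Suc r) - 1 < k\<close> \<pi>(2) by (simp add: e_def)
    qed
    ultimately show ?thesis
      using r by (simp add: e_def)
  qed
  from sum_le_telescoping[of R "\<lambda>r. Suc (\<pi> (a (Suc r) - 1)) - \<pi> (a r)" e, OF this] show ?thesis
    by (simp add: e_def)
qed

lemma exists_lessThan_le_of_sum_le:
  fixes f :: "nat \<Rightarrow> nat"
  assumes "(\<Sum>r<R. f r) \<le> R * c" "0 < R"
  shows "\<exists>r<R. f r \<le> c"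
proof (rule ccontr)
  assume "\<not> ?thesis"
  then have "R * c < (\<Sum>r<R. f r)"
    using sum_strict_mono[of "{..<R}" "\<lambda>_. c" f] \<open>0 < R\<close> by (simp add: not_le lessThan_empty_iff)
  with assms show False
    by simp
qed

lemma exists_short_heavy_window:
  assumes ws: "ws \<noteq> []" and len: "\<forall>w\<in>set ws. length w = N"
    and letters: "\<forall>w\<in>set ws. set w \<subseteq> A"
    and S_bounds: "\<And>xs. length xs = length ws \<Longrightarrow> set xs \<subseteq> A \<Longrightarrow> 0 \<le> S xs \<and> S xs \<le> s"
    and heavy: "real R * x \<le> opt_score S ws" and "0 \<le> s" "s < x"
    and short: "length ws * N \<le> R * c" and "0 < R"
  obtains st lw where "\<And>j. j < length ws \<Longrightarrow> 1 \<le> lw j \<and> st j + lw j \<le> N"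
    "(\<Sum>j<length ws. lw j) \<le> c" "x - s \<le> opt_score S (windows ws st lw)"
proof -
  let ?m = "length ws"
  obtain k \<pi> where \<pi>: "is_alignment ws k \<pi>" "opt_score S ws = alignment_score S ws k \<pi>"
    using opt_score_attained[OF ws] .
  have mono: "strict_mono_on {..<k} (\<pi> j)" and bound: "\<And>i. i < k \<Longrightarrow> \<pi> j i < N"
    if "j < ?m" for j
    using \<pi>(1) len that by (auto simp: is_alignment_def)
  define t where "t i = S (map (\<lambda>j. ws ! j ! \<pi> j i) [0..<?m])" for i
  have "0 \<le> t i \<and> t i \<le> s" if "i < k" for i
    unfolding t_def using set_alignment_column_subset[OF \<pi>(1) that letters] by (intro S_bounds) simp_all
  moreover have "real R * x \<le> (\<Sum>i<k. t i)"
    using heavy \<pi>(2) by (simp add: alignment_score_def t_def)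
  ultimately obtain a where a: "\<And>r. r < R \<Longrightarrow> a r < a (Suc r)" "\<And>r. r \<le> R \<Longrightarrow> a r \<le> k"
      and heavy_block: "\<And>r. r < R \<Longrightarrow> x - s \<le> (\<Sum>i\<in>{a r..<a (Suc r)}. t i)"
    using exists_heavy_blocks[where t=t and k=k and s=s and R=R and x=x] \<open>0 \<le> s\<close> \<open>s < x\<close> by blast
  define span where "span r = (\<lambda>j. Suc (\<pi> j (a (Suc r) - 1)) - \<pi> j (a r))" for r
  \<comment> \<open>the blocks occupy disjoint windows of every word, so their spans add up to at most \<open>m N\<close>\<close>
  have "(\<Sum>r<R. \<Sum>j<?m. span r j) = (\<Sum>j<?m. \<Sum>r<R. span r j)"
    by (rule sum.swap)
  also have "\<dots> \<le> (\<Sum>j<?m. N)"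
  proof (rule sum_mono)
    fix j assume "j \<in> {..<?m}"
    then have j: "j < ?m" by simp
    show "(\<Sum>r<R. span r j) \<le> N"
      unfolding span_def by (rule sum_block_spans_le[of k "\<pi> j" N R a, OF mono[OF j] bound[OF j] a])
  qed
  finally obtain r where r: "r < R" and short_block: "(\<Sum>j<?m. span r j) \<le> c"
    using exists_lessThan_le_of_sum_le[of "\<lambda>r. \<Sum>j<?m. span r j" R c] short \<open>0 < R\<close> by auto
  have "a r \<le> a (Suc r) - 1" "a (Suc r) - 1 < k"
    using a(1)[OF r] a(2)[of "Suc r"] r by auto
  then have "\<pi> j (a r) \<le> \<pi> j (a (Suc r) - 1)" "\<pi> j (a (Suc r) - 1) < N" if "j < ?m" for j
    using strict_mono_on_leD[OF mono[OF that]] bound[OF that] by auto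
  moreover have "x - s \<le> opt_score S (windows ws (\<lambda>j. \<pi> j (a r)) (span r))"
    using heavy_block[OF r] block_score_le_opt_score_windows[OF ws \<pi>(1) a(1)[OF r] a(2)[of "Suc r"], where S=S] r
    by (simp add: t_def span_def)
  ultimately show ?thesis
    using that[of "span r" "\<lambda>j. \<pi> j (a r)"] short_block by (force simp: span_def)
qed

section \<open>Words read off a grid\<close>

definition words_at :: "(nat \<times> nat \<Rightarrow> 'a) \<Rightarrow> (nat \<Rightarrow> nat \<Rightarrow> nat \<times> nat) \<Rightarrow> (nat \<Rightarrow> nat) \<Rightarrow> nat \<Rightarrow> 'a list list" where
  "words_at Z pos lw m = map (\<lambda>j. map (\<lambda>i. Z (pos j i)) [0..<lw j]) [0..<m]"

text \<open>The grid is indexed like the letters \<open>X i j\<close>, from 1: word \<open>j\<close> (counted from 0) of a column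
  segment consists of the rows \<open>st j + 1, \<dots>, st j + lw j\<close> of column \<open>j + 1\<close>.\<close>

abbreviation column_segments :: "(nat \<times> nat \<Rightarrow> 'a) \<Rightarrow> (nat \<Rightarrow> nat) \<Rightarrow> (nat \<Rightarrow> nat) \<Rightarrow> nat \<Rightarrow> 'a list list" where
  "column_segments Z st lw m \<equiv> words_at Z (\<lambda>j i. (st j + i + 1, j + 1)) lw m"

lemma length_words_at [simp]: "length (words_at Z pos lw m) = m"
  by (simp add: words_at_def)

lemma nth_words_at [simp]: "j < m \<Longrightarrow> words_at Z pos lw m ! j = map (\<lambda>i. Z (pos j i)) [0..<lw j]"
  by (simp add: words_at_def)

lemma words_at_eq_Nil_iff [simp]: "words_at Z pos lw m = [] \<longleftrightarrow> m = 0"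
  by (simp add: words_at_def)

lemma map_upt_add: "map f [0..<a + b] = map f [0..<a] @ map (\<lambda>i. f (a + i)) [0..<b]"
  by (induction b) auto

lemma column_segments_add:
  "column_segments Z st (\<lambda>j. a j + b j) m
     = map2 (@) (column_segments Z st a m) (column_segments Z (\<lambda>j. st j + a j) b m)"
  by (rule nth_equalityI) (simp_all add: map_upt_add add.assoc)

lemma windows_column_segments:
  assumes "\<And>j. j < m \<Longrightarrow> st j + lw j \<le> N"
  shows "windows (column_segments Z (\<lambda>_. 0) (\<lambda>_. N) m) st lw = column_segments Z st lw m"
proof (rule nth_equalityI)
  fix j assume "j < length (windows (column_segments Z (\<lambda>_. 0) (\<lambda>_. N) m) st lw)"
  then have j: "j < m" by (simp add: windows_def)
  then have "st j + i < N" if "i < lw j" for i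
    using assms[OF j] that by simp
  then show "windows (column_segments Z (\<lambda>_. 0) (\<lambda>_. N) m) st lw ! j = column_segments Z st lw m ! j"
    using j by (simp add: windows_def add.assoc)
qed (simp add: windows_def)

lemma opt_score_column_segments_prefix_le:
  assumes "0 < m" "\<And>j. j < m \<Longrightarrow> a j \<le> N"
  shows "opt_score S (column_segments Z (\<lambda>_. 0) a m) \<le> opt_score S (column_segments Z (\<lambda>_. 0) (\<lambda>_. N) m)"
proof -
  let ?rest = "column_segments Z a (\<lambda>j. N - a j) m"
  have "column_segments Z (\<lambda>_. 0) (\<lambda>_. N) m = column_segments Z (\<lambda>_. 0) (\<lambda>j. a j + (N - a j)) m"
    using assms(2) by (intro nth_equalityI) auto
  then have full: "column_segments Z (\<lambda>_. 0) (\<lambda>_. N) m = map2 (@) (column_segments Z (\<lambda>_. 0) a m) ?rest"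
    unfolding column_segments_add by simp
  have "opt_score S (column_segments Z (\<lambda>_. 0) a m) + 0
          \<le> opt_score S (column_segments Z (\<lambda>_. 0) a m) + opt_score S ?rest"
    using opt_score_nonneg \<open>0 < m\<close> by (intro add_left_mono) simp
  also have "\<dots> \<le> opt_score S (column_segments Z (\<lambda>_. 0) (\<lambda>_. N) m)"
    unfolding full using \<open>0 < m\<close> by (intro opt_score_append_superadditive) simp_all
  finally show ?thesis
    by simp
qed

text \<open>Copy \<open>k < m\<close> of a word tuple with lengths \<open>lw\<close> puts word \<open>j\<close> into column \<open>(j - k) mod m\<close>,
  below the words of the copies \<open>0, \<dots>, k - 1\<close>; so column \<open>r\<close> receives the words
  \<open>r mod m, (r + 1) mod m, \<dots>\<close> one after the other, and the copies occupy disjoint cells.\<close>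

definition column_offset :: "(nat \<Rightarrow> nat) \<Rightarrow> nat \<Rightarrow> nat \<Rightarrow> nat \<Rightarrow> nat" where
  "column_offset lw m k r = (\<Sum>k'<k. lw ((r + k') mod m))"

definition rotated_layout :: "(nat \<Rightarrow> nat) \<Rightarrow> nat \<Rightarrow> nat \<Rightarrow> nat \<Rightarrow> nat \<Rightarrow> nat \<times> nat" where
  "rotated_layout lw m k j i =
     (column_offset lw m k ((j + m - k) mod m) + i + 1, (j + m - k) mod m + 1)"

lemma add_mod_sub_mod_cancel: "r < (m::nat) \<Longrightarrow> k < m \<Longrightarrow> ((r + k) mod m + m - k) mod m = r"
  by (cases "r + k < m") (auto simp: mod_if)

lemma sub_mod_add_mod_cancel: "j < (m::nat) \<Longrightarrow> k < m \<Longrightarrow> ((j + m - k) mod m + k) mod m = j"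
  by (simp add: mod_add_left_eq)

lemma column_offset_mono: "k \<le> k' \<Longrightarrow> column_offset lw m k r \<le> column_offset lw m k' r"
  unfolding column_offset_def by (rule sum_mono2) auto

lemma column_offset_Suc: "column_offset lw m (Suc k) r = column_offset lw m k r + lw ((r + k) mod m)"
  by (simp add: column_offset_def)

lemma column_offset_full:
  assumes "r < m"
  shows "column_offset lw m m r = (\<Sum>j<m. lw j)"
  unfolding column_offset_def
proof (rule sum.reindex_bij_witness[where i="\<lambda>j. (j + m - r) mod m" and j="\<lambda>k'. (r + k') mod m"])
  fix j assume "j \<in> {..<m}"
  then show "(r + (j + m - r) mod m) mod m = j"
    using sub_mod_add_mod_cancel[of j m r] assms by (simp add: add.commute)
next
  fix k' assume "k' \<in> {..<m}"
  then show "((r + k') mod m + m - r) mod m = k'"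
    using add_mod_sub_mod_cancel[of k' m r] assms by (simp add: add.commute)
qed (use assms in auto)

lemma inj_on_rotated_layout:
  assumes "k < m"
  shows "inj_on (\<lambda>(j, i). rotated_layout lw m k j i) (SIGMA j:{..<m}. {..<lw j})"
proof (rule inj_onI, clarsimp)
  fix j i j' i' assume "j < m" "j' < m" "rotated_layout lw m k j i = rotated_layout lw m k j' i'"
  moreover from this have "j = j'"
    using sub_mod_add_mod_cancel[of j m k] sub_mod_add_mod_cancel[of j' m k] assms
    by (metis Pair_inject add_right_cancel rotated_layout_def)
  ultimately show "j = j' \<and> i = i'"
    by (simp add: rotated_layout_def)
qed

lemma rotated_layouts_disjoint:
  assumes "k < m" "k' < m" "k \<noteq> k'" "j < m" "i < lw j" "j' < m" "i' < lw j'"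
  shows "rotated_layout lw m k j i \<noteq> rotated_layout lw m k' j' i'"
proof
  assume eq: "rotated_layout lw m k j i = rotated_layout lw m k' j' i'"
  define r where "r = (j + m - k) mod m"
  have r': "(j' + m - k') mod m = r"
    using eq by (simp add: rotated_layout_def r_def)
  then have same_row: "column_offset lw m k r + i = column_offset lw m k' r + i'"
    using eq by (simp add: rotated_layout_def r_def)
  have j: "j = (r + k) mod m" and j': "j' = (r + k') mod m"
    using sub_mod_add_mod_cancel[of j m k] sub_mod_add_mod_cancel[of j' m k'] r' assms by (simp_all add: r_def)
  \<comment> \<open>the earlier copy ends, in column \<open>r\<close>, before the later one starts\<close>
  show False
  proof (cases "k < k'")
    case True
    have "column_offset lw m k r + lw j \<le> column_offset lw m k' r"
      using column_offset_mono[of "Suc k" k' lw m r] True by (simp add: column_offset_Suc j)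
    then show False using same_row assms(5) by simp
  next
    case False
    then have "column_offset lw m k' r + lw j' \<le> column_offset lw m k r"
      using column_offset_mono[of "Suc k'" k lw m r] assms(3) by (simp add: column_offset_Suc j')
    then show False using same_row assms(7) by simp
  qed
qed

lemma column_segments_rotated_copy:
  assumes "k < m"
  shows "column_segments Z (column_offset lw m k) (\<lambda>r. lw ((r + k) mod m)) m
           = rotate k (words_at Z (rotated_layout lw m k) lw m)"
proof (rule nth_equalityI)
  fix r assume "r < length (column_segments Z (column_offset lw m k) (\<lambda>r. lw ((r + k) mod m)) m)"
  then have r: "r < m" by simp
  have "((k + r) mod m + m - k) mod m = r"
    using add_mod_sub_mod_cancel[OF r assms] by (simp add: add.commute)
  then show "column_segments Z (column_offset lw m k) (\<lambda>r. lw ((r + k) mod m)) m ! r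
           = rotate k (words_at Z (rotated_layout lw m k) lw m) ! r"
    using r assms by (simp add: nth_rotate rotated_layout_def add.commute)
qed simp

lemma opt_score_rotated_copies:
  assumes "0 < m"
    and sym: "\<And>xs ys. length xs = m \<Longrightarrow> set xs \<subseteq> A \<Longrightarrow> mset ys = mset xs \<Longrightarrow> S ys = S xs"
    and Z: "\<And>i r. r < m \<Longrightarrow> Z (Suc i, Suc r) \<in> A" and short: "(\<Sum>j<m. lw j) \<le> N"
    and heavy: "\<And>k. k < m \<Longrightarrow> t \<le> opt_score S (words_at Z (rotated_layout lw m k) lw m)"
  shows "real m * t \<le> opt_score S (column_segments Z (\<lambda>_. 0) (\<lambda>_. N) m)"
proof -
  define P where "P k = column_segments Z (\<lambda>_. 0) (column_offset lw m k) m" for k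
  define C where "C k = column_segments Z (column_offset lw m k) (\<lambda>r. lw ((r + k) mod m)) m" for k
  have "real k * t \<le> opt_score S (P k)" if "k \<le> m" for k
    using that
  proof (induction k)
    case 0
    show ?case using opt_score_nonneg[of "P 0" S] \<open>0 < m\<close> by (simp add: P_def)
  next
    case (Suc k)
    then have k: "k < m" by simp
    have W_letters: "\<forall>w\<in>set (words_at Z (rotated_layout lw m k) lw m). set w \<subseteq> A"
      using Z \<open>0 < m\<close> by (auto simp: in_set_conv_nth rotated_layout_def)
    have "t \<le> opt_score S (words_at Z (rotated_layout lw m k) lw m)"
      using heavy[OF k] .
    also have "\<dots> \<le> opt_score S (C k)"
      unfolding C_def column_segments_rotated_copy[OF k]
    proof (rule opt_score_le_opt_score_rotate[OF _ _ W_letters])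
      fix xs ys assume "length xs = length (words_at Z (rotated_layout lw m k) lw m)"
        "set xs \<subseteq> A" "mset ys = mset xs"
      then show "S ys = S xs"
        by (intro sym) simp_all
    qed (use \<open>0 < m\<close> in simp)
    finally have "real k * t + t \<le> opt_score S (P k) + opt_score S (C k)"
      using Suc by simp
    also have "\<dots> \<le> opt_score S (map2 (@) (P k) (C k))"
      using \<open>0 < m\<close> by (intro opt_score_append_superadditive) (simp_all add: P_def C_def)
    also have "map2 (@) (P k) (C k) = P (Suc k)"
      unfolding P_def C_def column_offset_Suc column_segments_add by simp
    finally show ?case
      by (simp add: algebra_simps)
  qed
  from this[of m] have "real m * t \<le> opt_score S (P m)"
    by simp
  also have "\<dots> \<le> opt_score S (column_segments Z (\<lambda>_. 0) (\<lambda>_. N) m)"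
    unfolding P_def using \<open>0 < m\<close> column_offset_full short by (intro opt_score_column_segments_prefix_le) auto
  finally show ?thesis .
qed

section \<open>Independent letters\<close>

lemma finite_in_sets_PiM_borel:
  fixes G :: "('i \<Rightarrow> 'a::t1_space) set"
  assumes "finite J" "finite G" "G \<subseteq> extensional J"
  shows "G \<in> sets (PiM J (\<lambda>_. borel))"
proof -
  have "{v} \<in> sets (PiM J (\<lambda>_. borel))" if "v \<in> G" for v
  proof -
    have "{v} = PiE J (\<lambda>j. {v j})"
      using that assms(3) by (intro PiE_singleton[symmetric]) auto
    then show ?thesis
      using assms(1) by (auto intro!: sets_PiM_I_finite)
  qed
  then show ?thesis
    using assms(2) by (metis UN_singleton sets.finite_UN)
qed

lemma power_le_imp_le_powr_inverse:
  fixes p q :: real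
  assumes "0 \<le> p" "0 < m" "p ^ m \<le> q"
  shows "p \<le> q powr (1 / real m)"
proof -
  have "p = (p ^ m) powr (1 / real m)"
  proof (cases "p = 0")
    case False
    then have "p ^ m = p powr real m"
      using assms(1) by (simp add: powr_realpow)
    then show ?thesis
      using assms(1,2) by (simp add: powr_powr)
  qed (use assms(2) in simp)
  also have "\<dots> \<le> q powr (1 / real m)"
    using assms by (intro powr_mono2) auto
  finally show ?thesis .
qed

lemma window_count_le:
  fixes m n :: nat
  assumes "2 \<le> m"
  shows "real ((m\<^sup>2 * n) ^ m * (m * n) ^ m) \<le> inverse (2 ^ m) * real m ^ (4 * m) * real n ^ (2 * m)"
proof -
  have "(m\<^sup>2 * n) ^ m * (m * n) ^ m = (m ^ 3 * n\<^sup>2) ^ m"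
    by (simp add: power_mult_distrib[symmetric] power2_eq_square power3_eq_cube ac_simps)
  then have "real ((m\<^sup>2 * n) ^ m * (m * n) ^ m) = real m ^ (3 * m) * real n ^ (2 * m)"
    by (simp add: power_mult_distrib power_mult)
  also have "\<dots> \<le> inverse (2 ^ m) * real m ^ m * real m ^ (3 * m) * real n ^ (2 * m)"
  proof -
    have "(2::real) ^ m \<le> real m ^ m"
      using assms by (intro power_mono) auto
    then have "2 ^ m * (real m ^ (3 * m) * real n ^ (2 * m)) \<le> real m ^ m * (real m ^ (3 * m) * real n ^ (2 * m))"
      by (rule mult_right_mono) simp
    then show ?thesis
      by (simp add: field_simps)
  qed
  also have "\<dots> = inverse (2 ^ m) * real m ^ (4 * m) * real n ^ (2 * m)"
    by (simp add: power_add[symmetric])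
  finally show ?thesis .
qed

locale iid_letters = prob_space M for M :: "'w measure" +
  fixes m :: nat and A :: "real set" and X :: "nat \<Rightarrow> nat \<Rightarrow> 'w \<Rightarrow> real"
  assumes m_pos: "0 < m" and finite_A: "finite A"
    and X_measurable: "\<And>i j. i \<ge> 1 \<Longrightarrow> j \<in> {1..m} \<Longrightarrow> X i j \<in> borel_measurable M"
    and X_in_A: "\<And>i j \<omega>. i \<ge> 1 \<Longrightarrow> j \<in> {1..m} \<Longrightarrow> \<omega> \<in> space M \<Longrightarrow> X i j \<omega> \<in> A"
    and X_indep: "indep_vars (\<lambda>_. borel) (\<lambda>(i, j). X i j) ({1..} \<times> {1..m})"
    and X_ident: "\<And>i j. i \<ge> 1 \<Longrightarrow> j \<in> {1..m} \<Longrightarrow> distr M borel (X i j) = distr M borel (X 1 1)"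
begin

definition grid :: "(nat \<times> nat) set" where
  "grid = {1..} \<times> {1..m}"

definition letter :: "nat \<times> nat \<Rightarrow> 'w \<Rightarrow> real" where
  "letter = (\<lambda>(i, j). X i j)"

definition letter_prob :: "real \<Rightarrow> real" where
  "letter_prob a = prob (X 1 1 -` {a} \<inter> space M)"

definition word_tuples :: "(nat \<Rightarrow> nat) \<Rightarrow> real list list set" where
  "word_tuples lw = {ws. length ws = m \<and> (\<forall>j<m. length (ws ! j) = lw j \<and> set (ws ! j) \<subseteq> A)}"

definition weight :: "real list list \<Rightarrow> real" where
  "weight ws = (\<Prod>j<length ws. \<Prod>i<length (ws ! j). letter_prob (ws ! j ! i))"

definition injective_layout :: "(nat \<Rightarrow> nat \<Rightarrow> nat \<times> nat) \<Rightarrow> (nat \<Rightarrow> nat) \<Rightarrow> bool" where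
  "injective_layout pos lw \<longleftrightarrow>
     inj_on (\<lambda>(j, i). pos j i) (SIGMA j:{..<m}. {..<lw j}) \<and> (\<forall>j<m. \<forall>i<lw j. pos j i \<in> grid)"

lemma letter_in_A: "q \<in> grid \<Longrightarrow> \<omega> \<in> space M \<Longrightarrow> letter q \<omega> \<in> A"
  using X_in_A by (auto simp: grid_def letter_def)

lemma letter_measurable: "q \<in> grid \<Longrightarrow> letter q \<in> borel_measurable M"
  using X_measurable by (auto simp: grid_def letter_def)

lemma prob_letter_eq:
  assumes "q \<in> grid"
  shows "prob (letter q -` {a} \<inter> space M) = letter_prob a"
proof -
  have q: "fst q \<ge> 1" "snd q \<in> {1..m}" and one: "1 \<in> {1..m}"
    using assms m_pos by (auto simp: grid_def)
  have "prob (letter q -` {a} \<inter> space M) = measure (distr M borel (letter q)) {a}"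
    using letter_measurable[OF assms] by (simp add: measure_distr)
  also have "\<dots> = measure (distr M borel (X 1 1)) {a}"
    using X_ident[OF q] by (simp add: letter_def case_prod_beta)
  also have "\<dots> = letter_prob a"
    using X_measurable[OF _ one] by (simp add: letter_prob_def measure_distr)
  finally show ?thesis .
qed

lemma finite_word_tuples: "finite (word_tuples lw)"
proof -
  define K where "K = (\<Sum>j<m. lw j)"
  have "word_tuples lw \<subseteq> {ws. set ws \<subseteq> {w. set w \<subseteq> A \<and> length w \<le> K} \<and> length ws = m}"
  proof
    fix ws assume ws: "ws \<in> word_tuples lw"
    have "length (ws ! j) \<le> K \<and> set (ws ! j) \<subseteq> A" if "j < m" for j
      using ws that member_le_sum[of j "{..<m}" lw] by (simp add: word_tuples_def K_def)
    then show "ws \<in> {ws. set ws \<subseteq> {w. set w \<subseteq> A \<and> length w \<le> K} \<and> length ws = m}"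
      using ws by (auto simp: word_tuples_def in_set_conv_nth) (metis nth_mem subsetD)
  qed
  moreover have "finite {ws. set ws \<subseteq> {w. set w \<subseteq> A \<and> length w \<le> K} \<and> length ws = m}"
    by (intro finite_lists_length_eq finite_lists_length_le finite_A)
  ultimately show ?thesis
    by (rule finite_subset)
qed

lemma words_at_in_word_tuples:
  "injective_layout pos lw \<Longrightarrow> \<omega> \<in> space M \<Longrightarrow> words_at (\<lambda>q. letter q \<omega>) pos lw m \<in> word_tuples lw"
  by (auto simp: word_tuples_def injective_layout_def intro!: letter_in_A)

lemma words_at_eq_iff:
  "ws \<in> word_tuples lw \<Longrightarrow> words_at Z pos lw m = ws \<longleftrightarrow> (\<forall>j<m. \<forall>i<lw j. Z (pos j i) = ws ! j ! i)"
  by (auto simp: word_tuples_def list_eq_iff_nth_eq)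

lemma prob_words_at_eq:
  assumes layout: "injective_layout pos lw" and ws: "ws \<in> word_tuples lw"
  shows "{\<omega> \<in> space M. words_at (\<lambda>q. letter q \<omega>) pos lw m = ws} \<in> events" (is "?E \<in> events")
    and "prob {\<omega> \<in> space M. words_at (\<lambda>q. letter q \<omega>) pos lw m = ws} = weight ws"
proof -
  define D where "D = (SIGMA j:{..<m}. {..<lw j})"
  define cell where "cell = (\<lambda>(j, i). pos j i)"
  define target where "target d = ws ! fst d ! snd d" for d
  have inj: "inj_on cell D" and in_grid: "\<And>d. d \<in> D \<Longrightarrow> cell d \<in> grid"
    using layout by (auto simp: injective_layout_def D_def cell_def)
  have "finite D" by (simp add: D_def)
  have E: "?E = {\<omega> \<in> space M. \<forall>d\<in>D. letter (cell d) \<omega> = target d}"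
    using words_at_eq_iff[OF ws] by (auto simp: D_def cell_def target_def)
  have letter_event: "{\<omega> \<in> space M. letter q \<omega> = c} \<in> events" if "q \<in> grid" for q c
    using measurable_sets[OF letter_measurable[OF that], of "{c}"] by (simp add: vimage_def Int_def conj_commute)
  show "?E \<in> events"
    unfolding E using \<open>finite D\<close> in_grid letter_event by (intro sets.sets_Collect_finite_All) auto
  have "weight ws = (\<Prod>j<m. \<Prod>i<lw j. letter_prob (ws ! j ! i))"
    using ws by (auto simp: weight_def word_tuples_def intro!: prod.cong)
  also have "\<dots> = (\<Prod>d\<in>D. letter_prob (target d))"
    by (simp add: D_def prod.Sigma case_prod_beta target_def)
  finally have weight: "weight ws = (\<Prod>d\<in>D. letter_prob (target d))" .
  show "prob ?E = weight ws"
  proof (cases "D = {}")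
    case True
    then show ?thesis by (simp add: E weight prob_space)
  next
    case False
    define B where "B q = letter q -` {target (the_inv_into D cell q)} \<inter> space M" for q
    have B_cell: "B (cell d) = letter (cell d) -` {target d} \<inter> space M" if "d \<in> D" for d
      using the_inv_into_f_f[OF inj that] by (simp add: B_def)
    have "?E = (\<Inter>q\<in>cell ` D. B q)"
      using False by (auto simp: E B_cell)
    moreover have "prob (\<Inter>q\<in>cell ` D. B q) = (\<Prod>q\<in>cell ` D. prob (B q))"
    proof (rule indep_setsD)
      show "indep_sets (\<lambda>q. {letter q -` U \<inter> space M |U. U \<in> sets borel}) grid"
        using X_indep unfolding indep_vars_def2 by (simp add: letter_def grid_def)
    qed (use in_grid False \<open>finite D\<close> in \<open>auto simp: B_def\<close>)
    moreover have "(\<Prod>q\<in>cell ` D. prob (B q)) = (\<Prod>d\<in>D. letter_prob (target d))"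
      by (simp add: prod.reindex[OF inj] B_cell prob_letter_eq in_grid)
    ultimately show ?thesis
      using weight by simp
  qed
qed

lemma prob_words_at:
  assumes layout: "injective_layout pos lw"
  shows "{\<omega> \<in> space M. \<Phi> (words_at (\<lambda>q. letter q \<omega>) pos lw m)} \<in> events" (is "?E \<in> events")
    and "prob {\<omega> \<in> space M. \<Phi> (words_at (\<lambda>q. letter q \<omega>) pos lw m)} = (\<Sum>ws\<in>{ws \<in> word_tuples lw. \<Phi> ws}. weight ws)"
proof -
  let ?F = "\<lambda>ws. {\<omega> \<in> space M. words_at (\<lambda>q. letter q \<omega>) pos lw m = ws}"
  have E: "?E = (\<Union>ws\<in>{ws \<in> word_tuples lw. \<Phi> ws}. ?F ws)"
    using words_at_in_word_tuples[OF layout] by auto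
  have "finite {ws \<in> word_tuples lw. \<Phi> ws}"
    using finite_word_tuples by simp
  then show "?E \<in> events"
    unfolding E using prob_words_at_eq(1)[OF layout] by (intro sets.finite_UN) auto
  have "prob (\<Union>ws\<in>{ws \<in> word_tuples lw. \<Phi> ws}. ?F ws) = (\<Sum>ws\<in>{ws \<in> word_tuples lw. \<Phi> ws}. prob (?F ws))"
    using \<open>finite {ws \<in> word_tuples lw. \<Phi> ws}\<close> prob_words_at_eq(1)[OF layout]
    by (intro finite_measure_finite_Union) (auto simp: disjoint_family_on_def)
  then show "prob ?E = (\<Sum>ws\<in>{ws \<in> word_tuples lw. \<Phi> ws}. weight ws)"
    unfolding E using prob_words_at_eq(2)[OF layout] by simp
qed

lemma prob_Inter_words_at:
  fixes K :: nat
  assumes "0 < K" and layouts: "\<And>k. k < K \<Longrightarrow> injective_layout (pos k) lw"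
    and disjoint: "\<And>k k' j i j' i'. k < K \<Longrightarrow> k' < K \<Longrightarrow> k \<noteq> k' \<Longrightarrow> j < m \<Longrightarrow> i < lw j \<Longrightarrow>
                     j' < m \<Longrightarrow> i' < lw j' \<Longrightarrow> pos k j i \<noteq> pos k' j' i'"
  shows "prob (\<Inter>k<K. {\<omega> \<in> space M. \<Phi> (words_at (\<lambda>q. letter q \<omega>) (pos k) lw m)})
         = (\<Prod>k<K. prob {\<omega> \<in> space M. \<Phi> (words_at (\<lambda>q. letter q \<omega>) (pos k) lw m)})"
proof -
  define cells where "cells k = (\<lambda>(j, i). pos k j i) ` (SIGMA j:{..<m}. {..<lw j})" for k
  define Z where "Z k \<omega> = restrict (\<lambda>q. letter q \<omega>) (cells k)" for k \<omega>
  define G where "G k = {v \<in> PiE (cells k) (\<lambda>_. A). \<Phi> (words_at v (pos k) lw m)}" for k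
  have cells_grid: "cells k \<subseteq> grid" if "k < K" for k
    using layouts[OF that] by (auto simp: injective_layout_def cells_def)
  have "finite (cells k)" for k
    by (simp add: cells_def)
  have "indep_vars (\<lambda>k. PiM (cells k) (\<lambda>_. borel)) Z {..<K}"
    unfolding Z_def
  proof (rule indep_vars_restrict)
    show "indep_vars (\<lambda>_. borel) (\<lambda>q. letter q) grid"
      using X_indep by (simp add: letter_def grid_def)
  qed (use cells_grid disjoint in \<open>auto simp: disjoint_family_on_def cells_def\<close>)
  then have indep: "indep_sets (\<lambda>k. {Z k -` U \<inter> space M | U. U \<in> sets (PiM (cells k) (\<lambda>_. borel))}) {..<K}"
    by (simp add: indep_vars_def2)
  have events_eq: "{\<omega> \<in> space M. \<Phi> (words_at (\<lambda>q. letter q \<omega>) (pos k) lw m)} = Z k -` G k \<inter> space M"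
    if "k < K" for k
  proof -
    have "words_at (Z k \<omega>) (pos k) lw m = words_at (\<lambda>q. letter q \<omega>) (pos k) lw m" for \<omega>
      by (auto simp: words_at_def Z_def cells_def intro!: map_cong)
    moreover have "Z k \<omega> \<in> PiE (cells k) (\<lambda>_. A)" if "\<omega> \<in> space M" for \<omega>
      using cells_grid[OF \<open>k < K\<close>] letter_in_A that by (auto simp: Z_def)
    ultimately show ?thesis
      by (auto simp: G_def)
  qed
  have G_sets: "G k \<in> sets (PiM (cells k) (\<lambda>_. borel))" for k
  proof (rule finite_in_sets_PiM_borel)
    show "finite (G k)"
      by (rule finite_subset[of _ "PiE (cells k) (\<lambda>_. A)"])
        (auto simp: G_def intro!: finite_PiE \<open>finite (cells k)\<close> finite_A)
  qed (auto simp: G_def PiE_def \<open>finite (cells k)\<close>)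
  have "prob (\<Inter>k\<in>{..<K}. Z k -` G k \<inter> space M) = (\<Prod>k\<in>{..<K}. prob (Z k -` G k \<inter> space M))"
    using G_sets \<open>0 < K\<close> by (intro indep_setsD[OF indep]) auto
  moreover have "(\<Inter>k<K. {\<omega> \<in> space M. \<Phi> (words_at (\<lambda>q. letter q \<omega>) (pos k) lw m)})
                   = (\<Inter>k\<in>{..<K}. Z k -` G k \<inter> space M)"
    using events_eq by (intro INF_cong) auto
  moreover have "(\<Prod>k\<in>{..<K}. prob (Z k -` G k \<inter> space M))
                   = (\<Prod>k<K. prob {\<omega> \<in> space M. \<Phi> (words_at (\<lambda>q. letter q \<omega>) (pos k) lw m)})"
    using events_eq by (intro prod.cong) auto
  ultimately show ?thesis
    by simp
qed

lemma A_nonempty: "A \<noteq> {}"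
  using X_in_A[of 1 1] m_pos subset_empty not_empty by fastforce

lemma injective_layout_column_segments: "injective_layout (\<lambda>j i. (st j + i + 1, j + 1)) lw"
  by (auto simp: injective_layout_def grid_def inj_on_def)

lemma injective_layout_rotated_layout: "k < m \<Longrightarrow> injective_layout (rotated_layout lw m k) lw"
  using inj_on_rotated_layout m_pos by (auto simp: injective_layout_def grid_def rotated_layout_def Suc_le_eq)

lemma prob_words_at_layout_eq:
  "injective_layout pos lw \<Longrightarrow> injective_layout pos' lw \<Longrightarrow>
     prob {\<omega> \<in> space M. \<Phi> (words_at (\<lambda>q. letter q \<omega>) pos lw m)}
     = prob {\<omega> \<in> space M. \<Phi> (words_at (\<lambda>q. letter q \<omega>) pos' lw m)}"
  by (simp add: prob_words_at(2))

lemma L_N_eq_opt_score: "L_N S m X N \<omega> = opt_score S (column_segments (\<lambda>q. letter q \<omega>) (\<lambda>_. 0) (\<lambda>_. N) m)"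
proof -
  have "[1..<N + 1] = map Suc [0..<N]" for N
    by (simp add: map_Suc_upt)
  then show ?thesis
    by (simp add: L_N_def words_at_def letter_def comp_def)
qed

text \<open>The \<open>m\<close> rotated copies of a layout are disjoint, hence independent, and stacked they fit
  into the first \<open>N\<close> letters of the words.\<close>

lemma power_prob_heavy_le:
  assumes sym: "\<And>xs ys. length xs = m \<Longrightarrow> set xs \<subseteq> A \<Longrightarrow> mset ys = mset xs \<Longrightarrow> S ys = S xs"
    and layout: "injective_layout pos lw" and short: "(\<Sum>j<m. lw j) \<le> N"
  shows "prob {\<omega> \<in> space M. t \<le> opt_score S (words_at (\<lambda>q. letter q \<omega>) pos lw m)} ^ m
         \<le> prob {\<omega> \<in> space M. real m * t \<le> opt_score S (column_segments (\<lambda>q. letter q \<omega>) (\<lambda>_. 0) (\<lambda>_. N) m)}"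
proof -
  let ?E = "\<lambda>k. {\<omega> \<in> space M. t \<le> opt_score S (words_at (\<lambda>q. letter q \<omega>) (rotated_layout lw m k) lw m)}"
  have "prob {\<omega> \<in> space M. t \<le> opt_score S (words_at (\<lambda>q. letter q \<omega>) pos lw m)} ^ m
          = (\<Prod>k<m. prob {\<omega> \<in> space M. t \<le> opt_score S (words_at (\<lambda>q. letter q \<omega>) pos lw m)})"
    by simp
  also have "\<dots> = (\<Prod>k<m. prob (?E k))"
    using prob_words_at_layout_eq[OF layout injective_layout_rotated_layout] by (intro prod.cong) auto
  also have "\<dots> = prob (\<Inter>k<m. ?E k)"
    using m_pos injective_layout_rotated_layout rotated_layouts_disjoint
    by (intro prob_Inter_words_at[symmetric]) auto
  also have "\<dots> \<le> prob {\<omega> \<in> space M. real m * t \<le> opt_score S (column_segments (\<lambda>q. letter q \<omega>) (\<lambda>_. 0) (\<lambda>_. N) m)}"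
  proof (rule finite_measure_mono)
    show "(\<Inter>k<m. ?E k) \<subseteq> {\<omega> \<in> space M. real m * t \<le> opt_score S (column_segments (\<lambda>q. letter q \<omega>) (\<lambda>_. 0) (\<lambda>_. N) m)}"
    proof
      fix \<omega> assume \<omega>: "\<omega> \<in> (\<Inter>k<m. ?E k)"
      then have "\<omega> \<in> space M"
        using m_pos by auto
      moreover have "letter (Suc i, Suc r) \<omega> \<in> A" if "r < m" for i r
        using that \<open>\<omega> \<in> space M\<close> by (intro letter_in_A) (auto simp: grid_def)
      ultimately show "\<omega> \<in> {\<omega> \<in> space M. real m * t \<le> opt_score S (column_segments (\<lambda>q. letter q \<omega>) (\<lambda>_. 0) (\<lambda>_. N) m)}"
        using opt_score_rotated_copies[OF m_pos sym _ short] \<omega> by auto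
    qed
  qed (use prob_words_at(1)[OF injective_layout_column_segments, of _ "\<lambda>_. 0"] in simp)
  finally show ?thesis .
qed

definition window_configs :: "nat \<Rightarrow> nat \<Rightarrow> ((nat \<Rightarrow> nat) \<times> (nat \<Rightarrow> nat)) set" where
  "window_configs N c = {(st, lw). st \<in> PiE {..<m} (\<lambda>_. {..<N}) \<and> lw \<in> PiE {..<m} (\<lambda>_. {1..c})
                                   \<and> (\<Sum>j<m. lw j) \<le> c}"

definition window_event :: "(real list \<Rightarrow> real) \<Rightarrow> real \<Rightarrow> (nat \<Rightarrow> nat) \<times> (nat \<Rightarrow> nat) \<Rightarrow> 'w set" where
  "window_event S t cf = {\<omega> \<in> space M. t \<le> opt_score S (column_segments (\<lambda>q. letter q \<omega>) (fst cf) (snd cf) m)}"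

lemma window_configs_subset: "window_configs N c \<subseteq> PiE {..<m} (\<lambda>_. {..<N}) \<times> PiE {..<m} (\<lambda>_. {1..c})"
  by (auto simp: window_configs_def)

lemma finite_window_configs: "finite (window_configs N c)"
  by (rule finite_subset[OF window_configs_subset]) (auto intro!: finite_PiE)

lemma card_window_configs_le: "card (window_configs N c) \<le> N ^ m * c ^ m"
proof -
  have "card (window_configs N c) \<le> card (PiE {..<m} (\<lambda>_. {..<N}) \<times> PiE {..<m} (\<lambda>_. {1..c}))"
    by (rule card_mono[OF _ window_configs_subset]) (auto intro!: finite_PiE)
  then show ?thesis
    by (simp add: card_cartesian_product card_PiE)
qed

lemma window_event_in_events: "window_event S t cf \<in> events"
  unfolding window_event_def by (rule prob_words_at(1)[OF injective_layout_column_segments])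

lemma prob_window_event_le:
  assumes sym: "\<And>xs ys. length xs = m \<Longrightarrow> set xs \<subseteq> A \<Longrightarrow> mset ys = mset xs \<Longrightarrow> S ys = S xs"
    and short: "(\<Sum>j<m. snd cf j) \<le> c"
  shows "prob (window_event S t cf) \<le> prob {\<omega> \<in> space M. real m * t \<le> L_N S m X c \<omega>} powr (1 / real m)"
  using power_prob_heavy_le[where t=t, OF sym injective_layout_column_segments[of "fst cf"] short] m_pos
  by (intro power_le_imp_le_powr_inverse) (simp_all add: window_event_def L_N_eq_opt_score)

lemma heavy_L_N_subset_window_events:
  assumes S_bounds: "\<And>xs. length xs = m \<Longrightarrow> set xs \<subseteq> A \<Longrightarrow> 0 \<le> S xs \<and> S xs \<le> s"
    and "0 \<le> s" "s < x"
  shows "{\<omega> \<in> space M. real (m\<^sup>2) * x \<le> L_N S m X (m\<^sup>2 * n) \<omega>}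
           \<subseteq> (\<Union>cf\<in>window_configs (m\<^sup>2 * n) (m * n). window_event S (x - s) cf)"
proof
  fix \<omega> assume "\<omega> \<in> {\<omega> \<in> space M. real (m\<^sup>2) * x \<le> L_N S m X (m\<^sup>2 * n) \<omega>}"
  then have \<omega>: "\<omega> \<in> space M" and heavy: "real (m\<^sup>2) * x \<le> L_N S m X (m\<^sup>2 * n) \<omega>"
    by auto
  define ws where "ws = column_segments (\<lambda>q. letter q \<omega>) (\<lambda>_. 0) (\<lambda>_. m\<^sup>2 * n) m"
  have letters: "\<forall>w\<in>set ws. set w \<subseteq> A"
    using \<omega> by (auto simp: ws_def in_set_conv_nth grid_def intro!: letter_in_A)
  obtain st lw where window: "\<And>j. j < m \<Longrightarrow> 1 \<le> lw j \<and> st j + lw j \<le> m\<^sup>2 * n"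
    and short: "(\<Sum>j<m. lw j) \<le> m * n" and heavy_window: "x - s \<le> opt_score S (windows ws st lw)"
  proof (rule exists_short_heavy_window[where ws=ws and N="m\<^sup>2 * n" and R="m\<^sup>2" and c="m * n",
                                   OF _ _ letters _ _ \<open>0 \<le> s\<close> \<open>s < x\<close>])
    show "length ws * (m\<^sup>2 * n) \<le> m\<^sup>2 * (m * n)"
      by (simp add: ws_def power2_eq_square)
  qed (use m_pos heavy S_bounds in \<open>auto simp: ws_def L_N_eq_opt_score in_set_conv_nth\<close>)
  define cf where "cf = (restrict st {..<m}, restrict lw {..<m})"
  have "cf \<in> window_configs (m\<^sup>2 * n) (m * n)"
  proof -
    have "lw j \<le> m * n" if "j < m" for j
      using short member_le_sum[of j "{..<m}" lw] that by simp
    then show ?thesis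
      using window short by (force simp: window_configs_def cf_def PiE_iff)
  qed
  moreover have "windows ws st lw = column_segments (\<lambda>q. letter q \<omega>) (fst cf) (snd cf) m"
    unfolding ws_def using window by (subst windows_column_segments) (auto simp: cf_def words_at_def)
  ultimately show "\<omega> \<in> (\<Union>cf\<in>window_configs (m\<^sup>2 * n) (m * n). window_event S (x - s) cf)"
    using heavy_window \<omega> by (auto simp: window_event_def)
qed

lemma score_le_Sup:
  fixes S :: "real list \<Rightarrow> real"
  assumes S_nonneg: "\<And>xs. length xs = m \<Longrightarrow> set xs \<subseteq> A \<Longrightarrow> S xs \<ge> 0"
  shows "\<And>xs. length xs = m \<Longrightarrow> set xs \<subseteq> A \<Longrightarrow> 0 \<le> S xs \<and> S xs \<le> Sup (S ` {xs. length xs = m \<and> set xs \<subseteq> A})"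
    and "0 \<le> Sup (S ` {xs. length xs = m \<and> set xs \<subseteq> A})"
proof -
  have "finite (S ` {xs. length xs = m \<and> set xs \<subseteq> A})"
    using finite_lists_length_eq[OF finite_A, of m] by (simp add: conj_commute)
  then have bdd: "bdd_above (S ` {xs. length xs = m \<and> set xs \<subseteq> A})"
    by (rule bdd_above_finite)
  show bounds: "0 \<le> S xs \<and> S xs \<le> Sup (S ` {xs. length xs = m \<and> set xs \<subseteq> A})"
    if "length xs = m" "set xs \<subseteq> A" for xs
  proof
    show "0 \<le> S xs"
      using S_nonneg[OF that] .
    have "S xs \<in> S ` {xs. length xs = m \<and> set xs \<subseteq> A}"
      using that by simp
    then show "S xs \<le> Sup (S ` {xs. length xs = m \<and> set xs \<subseteq> A})"
      using bdd by (rule cSup_upper)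
  qed
  obtain a where "a \<in> A"
    using A_nonempty by blast
  then show "0 \<le> Sup (S ` {xs. length xs = m \<and> set xs \<subseteq> A})"
    using bounds[of "replicate m a"] m_pos by simp
qed

lemma prob_heavy_L_N_le_card:
  assumes S_nonneg: "\<And>xs. length xs = m \<Longrightarrow> set xs \<subseteq> A \<Longrightarrow> S xs \<ge> 0"
    and sym: "\<And>xs ys. length xs = m \<Longrightarrow> set xs \<subseteq> A \<Longrightarrow> mset ys = mset xs \<Longrightarrow> S ys = S xs"
    and "Sup (S ` {xs. length xs = m \<and> set xs \<subseteq> A}) < x" (is "?s < x")
  shows "prob {\<omega> \<in> space M. real (m\<^sup>2) * x \<le> L_N S m X (m\<^sup>2 * n) \<omega>}
         \<le> real (card (window_configs (m\<^sup>2 * n) (m * n)))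
             * prob {\<omega> \<in> space M. real m * (x - ?s) \<le> L_N S m X (m * n) \<omega>} powr (1 / real m)"
    (is "prob ?heavy \<le> real (card ?C) * ?p powr (1 / real m)")
proof -
  have bounds: "0 \<le> S xs \<and> S xs \<le> ?s" if "length xs = m" "set xs \<subseteq> A" for xs
    using that by (intro score_le_Sup(1) S_nonneg)
  have "0 \<le> ?s"
    by (intro score_le_Sup(2) S_nonneg)
  have "?heavy \<subseteq> (\<Union>cf\<in>?C. window_event S (x - ?s) cf)"
    by (rule heavy_L_N_subset_window_events) (use bounds \<open>0 \<le> ?s\<close> \<open>?s < x\<close> in auto)
  then have "prob ?heavy \<le> prob (\<Union>cf\<in>?C. window_event S (x - ?s) cf)"
    by (rule finite_measure_mono) (intro sets.finite_UN finite_window_configs window_event_in_events)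
  also have "\<dots> \<le> (\<Sum>cf\<in>?C. prob (window_event S (x - ?s) cf))"
    by (rule finite_measure_subadditive_finite[OF finite_window_configs]) (auto intro: window_event_in_events)
  also have "\<dots> \<le> (\<Sum>cf\<in>?C. ?p powr (1 / real m))"
  proof (rule sum_mono)
    fix cf assume "cf \<in> ?C"
    then have short: "(\<Sum>j<m. snd cf j) \<le> m * n"
      by (cases cf) (simp add: window_configs_def)
    show "prob (window_event S (x - ?s) cf) \<le> ?p powr (1 / real m)"
      by (rule prob_window_event_le[OF _ short]) (rule sym)
  qed
  finally show ?thesis
    by simp
qed

lemma prob_heavy_L_N_le:
  fixes S :: "real list \<Rightarrow> real" and x :: real and n :: nat
  assumes "2 \<le> m"
    and S_nonneg: "\<And>xs. length xs = m \<Longrightarrow> set xs \<subseteq> A \<Longrightarrow> S xs \<ge> 0"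
    and sym: "\<And>xs ys. length xs = m \<Longrightarrow> set xs \<subseteq> A \<Longrightarrow> mset ys = mset xs \<Longrightarrow> S ys = S xs"
    and "x > 0"
  shows "measure M {\<omega> \<in> space M. L_N S m X (m^2 * n) \<omega> \<ge> real (m^2) * x}
         \<le> inverse (2 ^ m) * real m ^ (4 * m) * real n ^ (2 * m) *
           (measure M {\<omega> \<in> space M.
              L_N S m X (m * n) \<omega> \<ge> real m * (x - Sup (S ` {xs. length xs = m \<and> set xs \<subseteq> A}))})
             powr (1 / real m)"
    (is "prob ?heavy \<le> ?c * ?p powr _")
proof -
  let ?s = "Sup (S ` {xs. length xs = m \<and> set xs \<subseteq> A})"
  have count_le: "real ((m\<^sup>2 * n) ^ m * (m * n) ^ m) \<le> ?c"
    by (rule window_count_le[OF \<open>2 \<le> m\<close>])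
  consider (empty) "n = 0" | (trivial) "n > 0" "x \<le> ?s" | (main) "n > 0" "?s < x"
    by linarith
  then show ?thesis
  proof cases
    case empty
    then have "L_N S m X (m\<^sup>2 * n) \<omega> = 0" for \<omega>
      using m_pos by (simp add: L_N_eq_opt_score) (intro opt_score_Nil_words, auto simp: in_set_conv_nth)
    then have "?heavy = {}"
      using m_pos \<open>x > 0\<close> by (auto simp: not_le)
    moreover have "0 \<le> ?c * ?p powr (1 / real m)"
      by simp
    ultimately show ?thesis
      by (simp only: measure_empty)
  next
    case trivial
    have "real m * (x - ?s) \<le> 0"
      using trivial by (simp add: mult_nonneg_nonpos)
    also have "0 \<le> L_N S m X (m * n) \<omega>" for \<omega>
      using m_pos by (simp add: L_N_eq_opt_score opt_score_nonneg)
    finally have "?c * ?p powr (1 / real m) = ?c"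
      by (simp add: prob_space)
    have "1 \<le> (m\<^sup>2 * n) ^ m * (m * n) ^ m"
      using trivial m_pos by (simp add: Suc_le_eq)
    then have "1 \<le> real ((m\<^sup>2 * n) ^ m * (m * n) ^ m)"
      by (simp only: one_of_nat_le_iff)
    then have "1 \<le> ?c"
      using count_le by linarith
    with \<open>?c * ?p powr (1 / real m) = ?c\<close> show ?thesis
      using prob_le_1[of ?heavy] by linarith
  next
    case main
    have "real (card (window_configs (m\<^sup>2 * n) (m * n))) \<le> real ((m\<^sup>2 * n) ^ m * (m * n) ^ m)"
      by (simp only: of_nat_le_iff card_window_configs_le)
    with count_le have "real (card (window_configs (m\<^sup>2 * n) (m * n))) * ?p powr (1 / real m) \<le> ?c * ?p powr (1 / real m)"
      by (intro mult_right_mono) simp_all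
    moreover have "prob ?heavy \<le> real (card (window_configs (m\<^sup>2 * n) (m * n))) * ?p powr (1 / real m)"
      by (intro prob_heavy_L_N_le_card S_nonneg sym main(2))
    ultimately show ?thesis
      by linarith
  qed
qed

end

theorem proposition2p3:
  fixes M :: "'w measure" and m :: nat and A :: "real set"
    and X :: "nat \<Rightarrow> nat \<Rightarrow> 'w \<Rightarrow> real" and S :: "real list \<Rightarrow> real" and D :: real
  assumes "prob_space M"
    and "m \<ge> 2"
    and "finite A"
    and "\<And>i j. i \<ge> 1 \<Longrightarrow> j \<in> {1..m} \<Longrightarrow> X i j \<in> borel_measurable M"
    and "\<And>i j \<omega>. i \<ge> 1 \<Longrightarrow> j \<in> {1..m} \<Longrightarrow> \<omega> \<in> space M \<Longrightarrow> X i j \<omega> \<in> A"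
    and "prob_space.indep_vars M (\<lambda>_. borel) (\<lambda>(i, j). X i j) ({1..} \<times> {1..m})"
    and "\<And>i j. i \<ge> 1 \<Longrightarrow> j \<in> {1..m} \<Longrightarrow> distr M borel (X i j) = distr M borel (X 1 1)"
    and "\<And>xs. length xs = m \<Longrightarrow> set xs \<subseteq> A \<Longrightarrow> S xs \<ge> 0"
    and "\<exists>xs. length xs = m \<and> set xs \<subseteq> A \<and> S xs \<noteq> 0"
    and "\<And>xs ys. length xs = m \<Longrightarrow> set xs \<subseteq> A \<Longrightarrow> mset ys = mset xs \<Longrightarrow> S ys = S xs"
    and "D > 0"
    and "\<And>xs ys. length xs = m \<Longrightarrow> length ys = m \<Longrightarrow> set xs \<subseteq> A \<Longrightarrow> set ys \<subseteq> A \<Longrightarrow>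
           card {i. i < m \<and> xs ! i \<noteq> ys ! i} \<le> 1 \<Longrightarrow> \<bar>S xs - S ys\<bar> \<le> D"
    and "x > (0::real)"
  shows "measure M {\<omega> \<in> space M. L_N S m X (m^2 * n) \<omega> \<ge> real (m^2) * x}
         \<le> inverse (2 ^ m) * real m ^ (4 * m) * real n ^ (2 * m) *
           (measure M {\<omega> \<in> space M.
              L_N S m X (m * n) \<omega> \<ge> real m * (x - Sup (S ` {xs. length xs = m \<and> set xs \<subseteq> A}))})
             powr (1 / real m)"
proof -
  have "0 < m"
    using assms(2) by simp
  interpret iid_letters M m A X
    by (intro iid_letters.intro iid_letters_axioms.intro) (fact assms \<open>0 < m\<close>)+
  show ?thesis
    by (rule prob_heavy_L_N_le[OF assms(2) assms(8) assms(10) assms(13)])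
qed

end
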